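(* Let $a>0$, let $q\in C^{1}[-a,a]$ be complex-valued, and let $f\in C^{2}[-a,a]$ be a solution of $f''-qf=0$ with $f(x)\neq0$ for all $x\in[-a,a]$ and $f(0)=1$; put $h:=f'(0)$. Let $K(x,t)$ be the solution of the Goursat problem $\big(\partial_x^{2}-q(x)\big)K=\partial_t^{2}K$, $K(x,x)=\frac12\int_0^x q(s)\,ds$, $K(x,-x)=0$, let $$\mathbf{K}(x,t;h)=\frac{h}{2}+K(x,t)+\frac{h}{2}\int_{t}^{x}\big(K(x,s)-K(x,-s)\big)\,ds,$$ and $\mathbf{T}u(x)=u(x)+\int_{-x}^{x}\mathbf{K}(x,t;h)u(t)\,dt$. Let $\{\varphi_k\}$ be the functions built from $f$ with base point $x_0=0$ (see context). Then $\mathbf{T}[x^k]=\varphi_k$ for every $k\in\mathbb{N}_0$, and $$\Big(-\frac{d^{2}}{dx^{2}}+q(x)\Big)\mathbf{T}[u]=\mathbf{T}\Big[-\frac{d^{2}u}{dx^{2}}\Big]\qquad\text{for every }u\in C^{2}[-a,a].$$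
   Context: Given a nonvanishing $f\in C^2$ on an interval containing $x_0$, define $\widetilde{X}^{(0)}\equiv X^{(0)}\equiv1$ and for $n\ge1$: $\widetilde{X}^{(n)}(x)=n\int_{x_0}^{x}\widetilde{X}^{(n-1)}(s)(f^{2}(s))^{(-1)^{n-1}}ds$, $X^{(n)}(x)=n\int_{x_0}^{x}X^{(n-1)}(s)(f^{2}(s))^{(-1)^{n}}ds$; set $\varphi_k=fX^{(k)}$ for odd $k$ and $\varphi_k=f\widetilde{X}^{(k)}$ for even $k$. *)

theory Defs
  imports "HOL-Analysis.Analysis"
begin

definition dint :: "real \<Rightarrow> real \<Rightarrow> (real \<Rightarrow> complex) \<Rightarrow> complex" where
  "dint a b g = (if a \<le> b then integral {a..b} g else - integral {b..a} g)"

fun Xt :: "(real \<Rightarrow> complex) \<Rightarrow> real \<Rightarrow> nat \<Rightarrow> real \<Rightarrow> complex" where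
  "Xt f x0 0 x = 1"
| "Xt f x0 (Suc n) x = of_nat (Suc n) *
     dint x0 x (\<lambda>s. Xt f x0 n s * (if even n then (f s)^2 else inverse ((f s)^2)))"

fun X :: "(real \<Rightarrow> complex) \<Rightarrow> real \<Rightarrow> nat \<Rightarrow> real \<Rightarrow> complex" where
  "X f x0 0 x = 1"
| "X f x0 (Suc n) x = of_nat (Suc n) *
     dint x0 x (\<lambda>s. X f x0 n s * (if even n then inverse ((f s)^2) else (f s)^2))"

definition phi :: "(real \<Rightarrow> complex) \<Rightarrow> real \<Rightarrow> nat \<Rightarrow> real \<Rightarrow> complex" where
  "phi f x0 k x = f x * (if odd k then X f x0 k x else Xt f x0 k x)"

definition Omega :: "real \<Rightarrow> (real \<times> real) set" where
  "Omega a = {(x, t). \<bar>t\<bar> \<le> \<bar>x\<bar> \<and> \<bar>x\<bar> \<le> a}"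

definition bK :: "(real \<Rightarrow> real \<Rightarrow> complex) \<Rightarrow> complex \<Rightarrow> real \<Rightarrow> real \<Rightarrow> complex" where
  "bK K h x t = h / 2 + K x t + h / 2 * dint t x (\<lambda>s. K x s - K x (- s))"

definition bT :: "(real \<Rightarrow> real \<Rightarrow> complex) \<Rightarrow> complex \<Rightarrow> (real \<Rightarrow> complex) \<Rightarrow> real \<Rightarrow> complex" where
  "bT K h u x = u x + dint (- x) x (\<lambda>t. bK K h x t * u t)"

end

theory Submission
  imports Defs
begin

text \<open>Write T_h for bT K h. Integrating by parts twice in t and using the Goursat equation
  together with the values of K on the two diagonals shows that T_0, the operator with kernel K,
  intertwines -d^2/dx^2 + q with -d^2/dx^2. The correction term in the kernel of T_h amounts to
  T_h = T_0 \<circ> V_h with V_h u(t) = u(t) + h/2 \<integral>(-t..t) u, and V_h commutes with d^2/dx^2, so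
  T_h intertwines as well. Consequently T_h[x^k] and phi_k both solve
  y'' - q y = k (k - 1) phi_(k-2) (by induction on k), with the same Cauchy data at 0 when
  h = f'(0). As f is a nonvanishing solution of y'' = q y, a Wronskian argument shows that this
  Cauchy problem has at most one solution.\<close>

section \<open>Oriented integrals\<close>

lemma dint_refl [simp]: "dint a a g = 0"
  by (simp add: dint_def)

lemma dint_swap: "dint a b g = - dint b a g"
  by (cases "a = b") (auto simp: dint_def)

lemma dint_symmetric_eq: "dint (-y) y g = (if 0 \<le> y then 1 else -1) * integral {-\<bar>y\<bar>..\<bar>y\<bar>} g"
  by (auto simp: dint_def)

lemma atLeastAtMost_min_max_symmetric: "{min (-x) x..max (-x) x} = {-\<bar>x\<bar>..\<bar>x\<bar>::real}"
  by (auto simp: min_def max_def)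

lemma dint_cong:
  assumes "\<And>t. t \<in> {min a b..max a b} \<Longrightarrow> g t = g' t"
  shows "dint a b g = dint a b g'"
  unfolding dint_def using assms by (auto intro!: integral_cong)

lemma dint_add:
  assumes "continuous_on {min a b..max a b} g" "continuous_on {min a b..max a b} g'"
  shows "dint a b (\<lambda>t. g t + g' t) = dint a b g + dint a b g'"
proof -
  have "g integrable_on {min a b..max a b}" "g' integrable_on {min a b..max a b}"
    using assms by (auto intro: integrable_continuous_real)
  then show ?thesis unfolding dint_def
    by (cases "a \<le> b") (auto simp: integral_add min_def max_def)
qed

lemma dint_diff:
  assumes "continuous_on {min a b..max a b} g" "continuous_on {min a b..max a b} g'"
  shows "dint a b (\<lambda>t. g t - g' t) = dint a b g - dint a b g'"
proof -
  have "g integrable_on {min a b..max a b}" "g' integrable_on {min a b..max a b}"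
    using assms by (auto intro: integrable_continuous_real)
  then show ?thesis unfolding dint_def
    by (cases "a \<le> b") (auto simp: integral_diff min_def max_def)
qed

lemma dint_cmult: "dint a b (\<lambda>t. c * g t) = c * dint a b g"
  unfolding dint_def by (auto simp: integral_mult_right)

lemma dint_neg: "dint a b (\<lambda>t. - g t) = - dint a b g"
  unfolding dint_def by (auto simp: integral_neg)

lemma dint_reflect: "dint (-x) x (\<lambda>t. g (-t)) = dint (-x) x g"
  unfolding dint_def
  using Henstock_Kurzweil_Integration.integral_reflect_real[of x "-x" g]
    Henstock_Kurzweil_Integration.integral_reflect_real[of "-x" x g]
  by (cases "-x \<le> x") simp_all

lemma dint_odd_eq_0:
  assumes "\<And>t. g (-t) = - g t"
  shows "dint (-x) x g = 0"
  using dint_reflect[of x g] assms by (simp add: dint_neg)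

lemma dint_eq_integral_diff:
  assumes "c \<le> a" "c \<le> b" "g integrable_on {c..max a b}"
  shows "dint a b g = integral {c..b} g - integral {c..a} g"
proof (cases "a \<le> b")
  case True
  have "integral {c..a} g + integral {a..b} g = integral {c..b} g"
    by (rule Henstock_Kurzweil_Integration.integral_combine)
       (use assms True in \<open>auto intro: integrable_on_subinterval[OF assms(3)]\<close>)
  then show ?thesis using True by (simp add: dint_def algebra_simps)
next
  case False
  have "integral {c..b} g + integral {b..a} g = integral {c..a} g"
    by (rule Henstock_Kurzweil_Integration.integral_combine)
       (use assms False in \<open>auto intro: integrable_on_subinterval[OF assms(3)]\<close>)
  then show ?thesis using False by (simp add: dint_def algebra_simps)
qed

lemma dint_split:
  assumes "continuous_on {lo..hi} g" "a \<in> {lo..hi}" "b \<in> {lo..hi}" "c \<in> {lo..hi}"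
  shows "dint a b g = dint c b g - dint c a g"
proof -
  have int: "g integrable_on {lo..hi}"
    using assms(1) by (rule integrable_continuous_real)
  have "dint a b g = integral {lo..b} g - integral {lo..a} g"
       "dint c b g = integral {lo..b} g - integral {lo..c} g"
       "dint c a g = integral {lo..a} g - integral {lo..c} g"
    using assms by (auto intro!: dint_eq_integral_diff integrable_on_subinterval[OF int])
  then show ?thesis by simp
qed

lemma dint_fundamental_theorem:
  assumes "\<And>x. x \<in> {min a b..max a b} \<Longrightarrow>
             (F has_vector_derivative F' x) (at x within {min a b..max a b})"
  shows "dint a b F' = F b - F a"
proof (cases "a \<le> b")
  case True
  have "(F' has_integral F b - F a) {a..b}"
    by (rule fundamental_theorem_of_calculus) (use True assms in \<open>auto simp: min_def max_def\<close>)
  then show ?thesis using True by (simp add: dint_def integral_unique)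
next
  case False
  have "(F' has_integral F a - F b) {b..a}"
    by (rule fundamental_theorem_of_calculus) (use False assms in \<open>auto simp: min_def max_def\<close>)
  then show ?thesis using False by (simp add: dint_def integral_unique)
qed

lemma has_vector_derivative_dint:
  assumes "continuous_on {lo..hi} g" "x0 \<in> {lo..hi}" "x \<in> {lo..hi}"
  shows "((\<lambda>x. dint x0 x g) has_vector_derivative g x) (at x within {lo..hi})"
proof -
  have int: "g integrable_on {lo..hi}"
    using assms(1) by (rule integrable_continuous_real)
  have eq: "dint x0 y g = integral {lo..y} g - integral {lo..x0} g" if "y \<in> {lo..hi}" for y
    using assms that by (intro dint_eq_integral_diff) (auto intro!: integrable_on_subinterval[OF int])
  have "((\<lambda>y. integral {lo..y} g - integral {lo..x0} g) has_vector_derivative g x - 0)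
          (at x within {lo..hi})"
    by (intro derivative_intros integral_has_vector_derivative assms)
  then have "((\<lambda>y. integral {lo..y} g - integral {lo..x0} g) has_vector_derivative g x)
               (at x within {lo..hi})"
    by simp
  then show ?thesis
    by (rule has_vector_derivative_transform_within[where d=1]) (use eq assms in auto)
qed

lemma has_vector_derivative_reflect:
  assumes "\<And>x. x \<in> {-a..a} \<Longrightarrow> (f has_vector_derivative f' x) (at x within {-a..a})"
    and "x \<in> {-a..a}"
  shows "((\<lambda>t. f (-t)) has_vector_derivative - f' (-x)) (at x within {-a..a})"
proof -
  have neg: "((\<lambda>z. -z) has_vector_derivative -1) (at x within {-a..a})"
    by (auto intro!: derivative_eq_intros)
  have "(\<lambda>z. -z) ` {-a..a} = {-a..a::real}"
    by auto
  then have "(f has_vector_derivative f' (-x)) (at ((\<lambda>z. -z) x) within (\<lambda>z. -z) ` {-a..a})"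
    using assms by simp
  from vector_diff_chain_within[OF neg this] show ?thesis
    by (simp add: o_def)
qed

lemma continuous_on_reflect:
  fixes f :: "real \<Rightarrow> 'a::topological_space"
  assumes "continuous_on {-a..a} f"
  shows "continuous_on {-a..a} (\<lambda>t. f (-t))"
proof -
  have "continuous_on {-a..a} (f \<circ> (\<lambda>t. -t))"
    by (rule continuous_on_compose[OF _ continuous_on_subset[OF assms]]) (auto intro!: continuous_intros)
  then show ?thesis by (simp add: o_def)
qed

lemma has_vector_derivative_dint_symmetric:
  assumes "continuous_on {-m..m} g" "y \<in> {-m..m}"
  shows "((\<lambda>y. dint (-y) y g) has_vector_derivative g y + g (-y)) (at y within {-m..m})"
proof -
  have eq: "dint (-z) z g = dint 0 z g - dint 0 (-z) g" if "z \<in> {-m..m}" for z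
    by (rule dint_split[OF assms(1)]) (use that in auto)
  have "((\<lambda>z. dint 0 z g) has_vector_derivative g z) (at z within {-m..m})"
    if "z \<in> {-m..m}" for z
    using assms that by (intro has_vector_derivative_dint) auto
  from has_vector_derivative_diff[OF this[OF assms(2)] has_vector_derivative_reflect[OF this assms(2)]]
  have "((\<lambda>z. dint 0 z g - dint 0 (-z) g) has_vector_derivative g y + g (-y)) (at y within {-m..m})"
    by simp
  then show ?thesis
    by (rule has_vector_derivative_transform_within[where d=1]) (use eq assms in auto)
qed

lemma dint_symmetric_rescale:
  assumes "continuous_on {-\<bar>y\<bar>..\<bar>y\<bar>} g"
  shows "dint (-y) y g = of_real y * integral {-1..1} (\<lambda>s. g (y * s))"
proof -
  have rescale: "integral {-m..m} g = of_real m * integral {-1..1} (\<lambda>s. g (m * s))"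
    if m: "m > 0" "continuous_on {-m..m} g" for m and g :: "real \<Rightarrow> complex"
  proof -
    have "(g has_integral integral {-m..m} g) (cbox (-m) m)"
      using m by (auto intro!: integrable_integral integrable_continuous_real)
    from has_integral_affinity'[OF this m(1), of 0]
    have "integral {-1..1} (\<lambda>s. g (m * s)) = integral {-m..m} g /\<^sub>R m"
      using m by (simp add: integral_unique)
    then show ?thesis
      using m by (simp add: scaleR_conv_of_real field_simps)
  qed
  have "integral {- 1..- (- 1)} (\<lambda>s. (\<lambda>s. g (y * s)) (- s)) = integral {- 1..1} (\<lambda>s. g (y * s))"
    by (rule Henstock_Kurzweil_Integration.integral_reflect_real)
  moreover have "(\<lambda>s. (\<lambda>s. g (y * s)) (- s)) = (\<lambda>s. g (- y * s))"
    by auto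
  ultimately have reflect: "integral {-1..1} (\<lambda>s. g (- y * s)) = integral {-1..1} (\<lambda>s. g (y * s))"
    by simp
  consider "y = 0" | "y > 0" | "y < 0"
    by linarith
  then show ?thesis
  proof cases
    case 2
    then show ?thesis
      using rescale[of y g] assms by (simp add: dint_def)
  next
    case 3
    then have "dint (-y) y g = - integral {-(-y)..-y} g"
      by (simp add: dint_def)
    also have "\<dots> = of_real y * integral {-1..1} (\<lambda>s. g (- y * s))"
      using rescale[of "-y" g] assms 3 by simp
    finally show ?thesis
      using reflect by simp
  qed simp
qed

section \<open>Differentiability on the cone\<close>

lemma has_vector_derivative_increment_bound:
  fixes f f' :: "real \<Rightarrow> 'a::real_normed_vector"
  assumes "\<And>y. y \<in> S \<Longrightarrow> (f has_vector_derivative f' y) (at y within S)"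
    and "closed_segment a b \<subseteq> S"
    and "\<And>y. y \<in> closed_segment a b \<Longrightarrow> norm (f' y - c) \<le> B"
  shows "norm (f b - f a - (b - a) *\<^sub>R c) \<le> B * \<bar>b - a\<bar>"
proof -
  have "norm ((\<lambda>y. f y - y *\<^sub>R c) b - (\<lambda>y. f y - y *\<^sub>R c) a) \<le> B * norm (b - a)"
  proof (rule differentiable_bound[where f'="\<lambda>y h. h *\<^sub>R (f' y - c)"])
    fix y
    assume y: "y \<in> closed_segment a b"
    have "(f has_vector_derivative f' y) (at y within closed_segment a b)"
      using assms(1,2) y by (blast intro: has_vector_derivative_within_subset)
    then have "((\<lambda>y. f y - y *\<^sub>R c) has_vector_derivative (f' y - 1 *\<^sub>R c)) (at y within closed_segment a b)"
      by (auto intro!: derivative_eq_intros)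
    then show "((\<lambda>y. f y - y *\<^sub>R c) has_derivative (\<lambda>h. h *\<^sub>R (f' y - c)))
                 (at y within closed_segment a b)"
      by (simp add: has_vector_derivative_def)
    have "onorm (\<lambda>h. h *\<^sub>R (f' y - c)) = norm (f' y - c)"
      using onorm_scaleR_left[OF bounded_linear_ident] by (simp add: onorm_id)
    then show "onorm (\<lambda>h. h *\<^sub>R (f' y - c)) \<le> B"
      using assms(3)[OF y] by simp
  qed auto
  then show ?thesis
    by (simp add: algebra_simps)
qed

lemma mem_Omega_iff: "(x, t) \<in> Omega a \<longleftrightarrow> \<bar>t\<bar> \<le> \<bar>x\<bar> \<and> \<bar>x\<bar> \<le> a"
  by (simp add: Omega_def)

lemma Omega_slice: "\<bar>x\<bar> \<le> a \<Longrightarrow> {s. (x, s) \<in> Omega a} = {-\<bar>x\<bar>..\<bar>x\<bar>}"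
  by (auto simp: mem_Omega_iff max_def split: if_splits)

lemma dist_Pair_mono:
  fixes x t x0 t0 y s :: real
  assumes "\<bar>y - x0\<bar> \<le> \<bar>x - x0\<bar>" "\<bar>s - t0\<bar> \<le> \<bar>t - t0\<bar>"
  shows "dist (y, s) (x0, t0) \<le> dist (x, t) (x0, t0)"
proof -
  have "(dist y x0)\<^sup>2 + (dist s t0)\<^sup>2 \<le> (dist x x0)\<^sup>2 + (dist t t0)\<^sup>2"
    using assms by (intro add_mono power_mono) (auto simp: dist_real_def)
  then show ?thesis
    by (simp add: dist_Pair_Pair real_sqrt_le_mono)
qed

lemma segment_real_abs_bounds:
  fixes y a b :: real
  assumes "y \<in> closed_segment a b"
  shows "\<bar>y - a\<bar> \<le> \<bar>b - a\<bar>" and "\<bar>y\<bar> \<le> max \<bar>a\<bar> \<bar>b\<bar>"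
    and "a = 0 \<or> \<bar>b - a\<bar> < \<bar>a\<bar> \<Longrightarrow> min \<bar>a\<bar> \<bar>b\<bar> \<le> \<bar>y\<bar>"
  using assms by (auto simp: closed_segment_eq_real_ivl split: if_splits)

text \<open>The partial derivatives are only given along the slices of the cone, which contain no
  neighbourhood of its vertex. The increment is therefore split along two axis-parallel legs,
  chosen (according to whether the new point is farther from the axis t = 0 or not) so that
  both legs stay inside the cone.\<close>

lemma Omega_increment_bound:
  fixes F Fx Ft :: "real \<Rightarrow> real \<Rightarrow> 'a::real_normed_vector"
  assumes Fx: "\<And>x t. (x, t) \<in> Omega a \<Longrightarrow>
                 ((\<lambda>y. F y t) has_vector_derivative Fx x t) (at x within {y. (y, t) \<in> Omega a})"
    and Ft: "\<And>x t. (x, t) \<in> Omega a \<Longrightarrow>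
                 ((\<lambda>s. F x s) has_vector_derivative Ft x t) (at t within {s. (x, s) \<in> Omega a})"
    and p0: "(x0, t0) \<in> Omega a" and p: "(x, t) \<in> Omega a"
    and same_side: "x0 = 0 \<or> \<bar>x - x0\<bar> < \<bar>x0\<bar>"
    and bound_x: "\<And>y s. (y, s) \<in> Omega a \<Longrightarrow> y \<in> closed_segment x0 x \<Longrightarrow> s \<in> closed_segment t0 t \<Longrightarrow>
                    norm (Fx y s - Fx x0 t0) \<le> B"
    and bound_t: "\<And>y s. (y, s) \<in> Omega a \<Longrightarrow> y \<in> closed_segment x0 x \<Longrightarrow> s \<in> closed_segment t0 t \<Longrightarrow>
                    norm (Ft y s - Ft x0 t0) \<le> B"
  shows "norm (F x t - F x0 t0 - ((x - x0) *\<^sub>R Fx x0 t0 + (t - t0) *\<^sub>R Ft x0 t0))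
           \<le> B * \<bar>x - x0\<bar> + B * \<bar>t - t0\<bar>"
proof -
  have p0': "\<bar>t0\<bar> \<le> \<bar>x0\<bar>" "\<bar>x0\<bar> \<le> a" and pp: "\<bar>t\<bar> \<le> \<bar>x\<bar>" "\<bar>x\<bar> \<le> a"
    using p0 p by (auto simp: mem_Omega_iff)
  have leg_x: "norm (F x s - F x0 s - (x - x0) *\<^sub>R Fx x0 t0) \<le> B * \<bar>x - x0\<bar>"
    if "s \<in> closed_segment t0 t" "closed_segment x0 x \<subseteq> {y. (y, s) \<in> Omega a}" for s
    using that bound_x by (intro has_vector_derivative_increment_bound[OF Fx]) auto
  have leg_t: "norm (F y t - F y t0 - (t - t0) *\<^sub>R Ft x0 t0) \<le> B * \<bar>t - t0\<bar>"
    if "y \<in> closed_segment x0 x" "closed_segment t0 t \<subseteq> {s. (y, s) \<in> Omega a}" for y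
    using that bound_t by (intro has_vector_derivative_increment_bound[OF Ft]) auto
  show ?thesis
  proof (cases "\<bar>x0\<bar> \<le> \<bar>x\<bar>")
    case True
    have "norm (F x t0 - F x0 t0 - (x - x0) *\<^sub>R Fx x0 t0) \<le> B * \<bar>x - x0\<bar>"
      using True p0' pp
      by (intro leg_x) (auto simp: mem_Omega_iff max_def split: if_splits
          dest: segment_real_abs_bounds(2) segment_real_abs_bounds(3)[OF _ same_side])
    moreover have "norm (F x t - F x t0 - (t - t0) *\<^sub>R Ft x0 t0) \<le> B * \<bar>t - t0\<bar>"
      using True p0' pp
      by (intro leg_t) (auto simp: mem_Omega_iff max_def split: if_splits dest: segment_real_abs_bounds(2))
    ultimately show ?thesis
      using norm_triangle_ineq[of "F x t0 - F x0 t0 - (x - x0) *\<^sub>R Fx x0 t0"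
                                  "F x t - F x t0 - (t - t0) *\<^sub>R Ft x0 t0"]
      by (simp add: algebra_simps)
  next
    case False
    have "norm (F x0 t - F x0 t0 - (t - t0) *\<^sub>R Ft x0 t0) \<le> B * \<bar>t - t0\<bar>"
      using False p0' pp
      by (intro leg_t) (auto simp: mem_Omega_iff max_def split: if_splits dest: segment_real_abs_bounds(2))
    moreover have "norm (F x t - F x0 t - (x - x0) *\<^sub>R Fx x0 t0) \<le> B * \<bar>x - x0\<bar>"
      using False p0' pp
      by (intro leg_x) (auto simp: mem_Omega_iff max_def split: if_splits
          dest: segment_real_abs_bounds(2) segment_real_abs_bounds(3)[OF _ same_side])
    ultimately show ?thesis
      using norm_triangle_ineq[of "F x0 t - F x0 t0 - (t - t0) *\<^sub>R Ft x0 t0"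
                                  "F x t - F x0 t - (x - x0) *\<^sub>R Fx x0 t0"]
      by (simp add: algebra_simps)
  qed
qed

lemma Omega_has_derivative_of_partials:
  fixes F Fx Ft :: "real \<Rightarrow> real \<Rightarrow> 'a::real_normed_vector"
  assumes Fx: "\<And>x t. (x, t) \<in> Omega a \<Longrightarrow>
                 ((\<lambda>y. F y t) has_vector_derivative Fx x t) (at x within {y. (y, t) \<in> Omega a})"
    and Ft: "\<And>x t. (x, t) \<in> Omega a \<Longrightarrow>
                 ((\<lambda>s. F x s) has_vector_derivative Ft x t) (at t within {s. (x, s) \<in> Omega a})"
    and cont_Fx: "continuous_on (Omega a) (\<lambda>p. Fx (fst p) (snd p))"
    and cont_Ft: "continuous_on (Omega a) (\<lambda>p. Ft (fst p) (snd p))"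
    and p0: "(x0, t0) \<in> Omega a"
  shows "((\<lambda>p. F (fst p) (snd p)) has_derivative (\<lambda>d. fst d *\<^sub>R Fx x0 t0 + snd d *\<^sub>R Ft x0 t0))
           (at (x0, t0) within Omega a)"
  unfolding has_derivative_within_alt
proof (intro conjI allI impI)
  show "bounded_linear (\<lambda>d. fst d *\<^sub>R Fx x0 t0 + snd d *\<^sub>R Ft x0 t0)"
    by (auto intro!: bounded_linear_intros)
  fix e :: real
  assume "e > 0"
  then have e2: "e / 2 > 0" by simp
  obtain d1 where d1: "d1 > 0" "\<And>p. p \<in> Omega a \<Longrightarrow> dist p (x0, t0) < d1 \<Longrightarrow>
                         dist (Fx (fst p) (snd p)) (Fx x0 t0) < e / 2"
    using cont_Fx p0 e2 unfolding continuous_on_iff by (metis fst_conv snd_conv)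
  obtain d2 where d2: "d2 > 0" "\<And>p. p \<in> Omega a \<Longrightarrow> dist p (x0, t0) < d2 \<Longrightarrow>
                         dist (Ft (fst p) (snd p)) (Ft x0 t0) < e / 2"
    using cont_Ft p0 e2 unfolding continuous_on_iff by (metis fst_conv snd_conv)
  define d where "d = (if x0 = 0 then min d1 d2 else min (min d1 d2) \<bar>x0\<bar>)"
  show "\<exists>d>0. \<forall>p\<in>Omega a. norm (p - (x0, t0)) < d \<longrightarrow>
          norm (F (fst p) (snd p) - F (fst (x0, t0)) (snd (x0, t0))
            - (fst (p - (x0, t0)) *\<^sub>R Fx x0 t0 + snd (p - (x0, t0)) *\<^sub>R Ft x0 t0))
          \<le> e * norm (p - (x0, t0))"
  proof (intro exI[of _ d] conjI ballI impI)
    show "d > 0"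
      using d1 d2 by (auto simp: d_def)
    fix p
    assume p: "p \<in> Omega a" "norm (p - (x0, t0)) < d"
    obtain x t where pxt: "p = (x, t)"
      by (cases p)
    define D where "D = dist (x, t) (x0, t0)"
    have dx: "\<bar>x - x0\<bar> \<le> D" and dt: "\<bar>t - t0\<bar> \<le> D"
      using dist_Pair_mono[of x0 x0 x t0 t t0] dist_Pair_mono[of x0 x0 x t t t0]
      by (simp_all add: D_def dist_Pair_Pair dist_real_def)
    have D: "D < d"
      using p by (simp add: pxt D_def dist_norm)
    have close: "dist (y, s) (x0, t0) < min d1 d2"
      if "y \<in> closed_segment x0 x" "s \<in> closed_segment t0 t" for y s
      using dist_Pair_mono[OF segment_real_abs_bounds(1)[OF that(1)] segment_real_abs_bounds(1)[OF that(2)]] D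
      by (auto simp: D_def d_def split: if_splits)
    have "norm (F x t - F x0 t0 - ((x - x0) *\<^sub>R Fx x0 t0 + (t - t0) *\<^sub>R Ft x0 t0))
            \<le> e / 2 * \<bar>x - x0\<bar> + e / 2 * \<bar>t - t0\<bar>"
    proof (rule Omega_increment_bound[OF Fx Ft p0 p(1)[unfolded pxt]])
      show "x0 = 0 \<or> \<bar>x - x0\<bar> < \<bar>x0\<bar>"
        using dx D by (auto simp: d_def split: if_splits)
      fix y s
      assume "(y, s) \<in> Omega a" "y \<in> closed_segment x0 x" "s \<in> closed_segment t0 t"
      then show "norm (Fx y s - Fx x0 t0) \<le> e / 2" and "norm (Ft y s - Ft x0 t0) \<le> e / 2"
        using d1(2)[of "(y, s)"] d2(2)[of "(y, s)"] close by (auto simp: dist_norm)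
    qed
    also have "\<dots> \<le> e / 2 * D + e / 2 * D"
      using dx dt e2 by (intro add_mono mult_left_mono) auto
    also have "\<dots> = e * D"
      by simp
    finally show "norm (F (fst p) (snd p) - F (fst (x0, t0)) (snd (x0, t0))
        - (fst (p - (x0, t0)) *\<^sub>R Fx x0 t0 + snd (p - (x0, t0)) *\<^sub>R Ft x0 t0))
        \<le> e * norm (p - (x0, t0))"
      by (simp add: pxt D_def dist_norm)
  qed
qed

lemma has_vector_derivative_Omega_diagonals:
  fixes F Fx Ft :: "real \<Rightarrow> real \<Rightarrow> 'a::real_normed_vector"
  assumes Fx: "\<And>x t. (x, t) \<in> Omega a \<Longrightarrow>
                 ((\<lambda>y. F y t) has_vector_derivative Fx x t) (at x within {y. (y, t) \<in> Omega a})"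
    and Ft: "\<And>x t. (x, t) \<in> Omega a \<Longrightarrow>
                 ((\<lambda>s. F x s) has_vector_derivative Ft x t) (at t within {s. (x, s) \<in> Omega a})"
    and cont_Fx: "continuous_on (Omega a) (\<lambda>p. Fx (fst p) (snd p))"
    and cont_Ft: "continuous_on (Omega a) (\<lambda>p. Ft (fst p) (snd p))"
    and x: "x \<in> {-a..a}"
  shows "((\<lambda>x. F x x) has_vector_derivative Fx x x + Ft x x) (at x within {-a..a})"
    and "((\<lambda>x. F x (-x)) has_vector_derivative Fx x (-x) - Ft x (-x)) (at x within {-a..a})"
proof -
  have diagonal: "((\<lambda>x. F x (c * x)) has_vector_derivative Fx x (c * x) + c *\<^sub>R Ft x (c * x))
                    (at x within {-a..a})" if "\<bar>c\<bar> = 1" for c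
  proof -
    have line: "((\<lambda>x. (x, c * x)) has_derivative (\<lambda>h. (h, c * h))) (at x within {-a..a})"
      by (auto intro!: derivative_eq_intros)
    have "((\<lambda>p. F (fst p) (snd p)) has_derivative
            (\<lambda>d. fst d *\<^sub>R Fx x (c * x) + snd d *\<^sub>R Ft x (c * x)))
            (at ((\<lambda>x. (x, c * x)) x) within (\<lambda>x. (x, c * x)) ` {-a..a})"
      using that x
      by (intro has_derivative_subset[OF Omega_has_derivative_of_partials[OF Fx Ft cont_Fx cont_Ft]])
         (auto simp: mem_Omega_iff abs_mult)
    from diff_chain_within[OF line this] show ?thesis
      by (simp add: has_vector_derivative_def o_def algebra_simps)
  qed
  from diagonal[of 1] diagonal[of "-1"]
  show "((\<lambda>x. F x x) has_vector_derivative Fx x x + Ft x x) (at x within {-a..a})"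
    and "((\<lambda>x. F x (-x)) has_vector_derivative Fx x (-x) - Ft x (-x)) (at x within {-a..a})"
    by simp_all
qed

lemma continuous_on_Omega_slice:
  fixes g :: "real \<Rightarrow> real \<Rightarrow> 'a::topological_space"
  assumes "continuous_on (Omega a) (\<lambda>p. g (fst p) (snd p))" "\<bar>x\<bar> \<le> a"
  shows "continuous_on {-\<bar>x\<bar>..\<bar>x\<bar>} (\<lambda>t. g x t)"
  by (rule continuous_on_compose2[OF assms(1), of _ "\<lambda>t. (x, t)", simplified])
     (use assms(2) in \<open>auto intro!: continuous_intros simp: mem_Omega_iff\<close>)

lemma continuous_on_Omega_reflect:
  fixes g :: "real \<Rightarrow> real \<Rightarrow> 'a::topological_space"
  assumes "continuous_on (Omega a) (\<lambda>p. g (fst p) (snd p))"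
  shows "continuous_on (Omega a) (\<lambda>p. g (fst p) (- snd p))"
  by (rule continuous_on_compose2[OF assms, of _ "\<lambda>p. (fst p, - snd p)", simplified])
     (auto intro!: continuous_intros simp: Omega_def)

lemma continuous_on_Omega_snd:
  fixes v :: "real \<Rightarrow> 'a::topological_space"
  assumes "continuous_on {-a..a} v"
  shows "continuous_on (Omega a) (\<lambda>p. v (snd p))" "continuous_on (Omega a) (\<lambda>p. v (- snd p))"
  by (rule continuous_on_compose2[OF assms]; auto intro!: continuous_intros simp: Omega_def)+

definition kernel_integral ::
    "(real \<Rightarrow> real \<Rightarrow> complex) \<Rightarrow> (real \<Rightarrow> complex) \<Rightarrow> real \<Rightarrow> real \<Rightarrow> complex" where
  "kernel_integral g v x y = dint (-y) y (\<lambda>t. g x t * v t)"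

lemma kernel_integral_uminus: "kernel_integral g (\<lambda>t. - v t) x y = - kernel_integral g v x y"
  by (simp add: kernel_integral_def dint_neg)

lemma has_vector_derivative_kernel_integral_y:
  assumes cont_g: "continuous_on (Omega a) (\<lambda>p. g (fst p) (snd p))"
    and cont_v: "continuous_on {-a..a} v"
    and p: "(x, y) \<in> Omega a"
  shows "((\<lambda>y. kernel_integral g v x y) has_vector_derivative g x y * v y + g x (-y) * v (-y))
           (at y within {y. (x, y) \<in> Omega a})"
proof -
  have xa: "\<bar>x\<bar> \<le> a"
    using p by (simp add: mem_Omega_iff)
  have "continuous_on {-\<bar>x\<bar>..\<bar>x\<bar>} (\<lambda>t. g x t * v t)"
    by (intro continuous_intros continuous_on_Omega_slice[OF cont_g xa] continuous_on_subset[OF cont_v])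
       (use xa in auto)
  then show ?thesis
    unfolding Omega_slice[OF xa] kernel_integral_def
    by (rule has_vector_derivative_dint_symmetric) (use p in \<open>auto simp: mem_Omega_iff\<close>)
qed

lemma at_within_Omega_horizontal_slice:
  assumes "(x0, y) \<in> Omega a"
  obtains U where "convex U" "x0 \<in> U" "U \<subseteq> {x. (x, y) \<in> Omega a}"
    "at x0 within {x. (x, y) \<in> Omega a} = at x0 within U"
proof -
  have y: "\<bar>y\<bar> \<le> \<bar>x0\<bar>" "\<bar>x0\<bar> \<le> a"
    using assms by (auto simp: mem_Omega_iff)
  consider "y = 0" | "y \<noteq> 0" "x0 > 0" | "y \<noteq> 0" "x0 < 0"
    using y by force
  then show ?thesis
  proof cases
    case 1
    then have "{x. (x, y) \<in> Omega a} = {-a..a}"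
      by (auto simp: mem_Omega_iff)
    show ?thesis
      by (rule that[of "{-a..a}"]) (use y \<open>{x. (x, y) \<in> Omega a} = {-a..a}\<close> in auto)
  next
    case 2
    have "at x0 within {x. (x, y) \<in> Omega a} = at x0 within {\<bar>y\<bar>..a}"
      by (rule at_within_nhd[where S="{0<..}"]) (use 2 in \<open>auto simp: mem_Omega_iff\<close>)
    then show ?thesis
      by (intro that[of "{\<bar>y\<bar>..a}"]) (use 2 y in \<open>auto simp: mem_Omega_iff\<close>)
  next
    case 3
    have "at x0 within {x. (x, y) \<in> Omega a} = at x0 within {-a..-\<bar>y\<bar>}"
      by (rule at_within_nhd[where S="{..<0}"]) (use 3 in \<open>auto simp: mem_Omega_iff\<close>)
    then show ?thesis
      by (intro that[of "{-a..-\<bar>y\<bar>}"]) (use 3 y in \<open>auto simp: mem_Omega_iff\<close>)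
  qed
qed

lemma has_vector_derivative_kernel_integral_x:
  assumes g_x: "\<And>x t. (x, t) \<in> Omega a \<Longrightarrow>
                  ((\<lambda>y. g y t) has_vector_derivative gx x t) (at x within {y. (y, t) \<in> Omega a})"
    and cont_g: "continuous_on (Omega a) (\<lambda>p. g (fst p) (snd p))"
    and cont_gx: "continuous_on (Omega a) (\<lambda>p. gx (fst p) (snd p))"
    and cont_v: "continuous_on {-a..a} v"
    and p: "(x0, y) \<in> Omega a"
  shows "((\<lambda>x. kernel_integral g v x y) has_vector_derivative kernel_integral gx v x0 y)
           (at x0 within {x. (x, y) \<in> Omega a})"
proof -
  obtain U where U: "convex U" "x0 \<in> U" "U \<subseteq> {x. (x, y) \<in> Omega a}"
    "at x0 within {x. (x, y) \<in> Omega a} = at x0 within U"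
    using at_within_Omega_horizontal_slice[OF p] by blast
  have memU: "(x, t) \<in> Omega a" if "x \<in> U" "t \<in> cbox (-\<bar>y\<bar>) \<bar>y\<bar>" for x t
    using U(3) that by (auto simp: mem_Omega_iff)
  have "((\<lambda>x. integral (cbox (-\<bar>y\<bar>) \<bar>y\<bar>) (\<lambda>t. g x t * v t)) has_vector_derivative
          integral (cbox (-\<bar>y\<bar>) \<bar>y\<bar>) (\<lambda>t. gx x0 t * v t)) (at x0 within U)"
  proof (rule leibniz_rule_vector_derivative[where fx="\<lambda>x t. gx x t * v t"])
    fix x t
    assume xt: "x \<in> U" "t \<in> cbox (-\<bar>y\<bar>) \<bar>y\<bar>"
    have "U \<subseteq> {y. (y, t) \<in> Omega a}"
      using U(3) xt by (auto simp: mem_Omega_iff)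
    then show "((\<lambda>x. g x t * v t) has_vector_derivative gx x t * v t) (at x within U)"
      by (intro derivative_intros has_vector_derivative_within_subset[OF g_x[OF memU[OF xt]]])
  next
    fix x
    assume "x \<in> U"
    then have xa: "\<bar>x\<bar> \<le> a" "\<bar>y\<bar> \<le> \<bar>x\<bar>"
      using U(3) by (auto simp: mem_Omega_iff)
    have "continuous_on {-\<bar>y\<bar>..\<bar>y\<bar>} (\<lambda>t. g x t * v t)"
      by (intro continuous_intros continuous_on_subset[OF continuous_on_Omega_slice[OF cont_g xa(1)]]
            continuous_on_subset[OF cont_v]) (use xa in auto)
    then show "(\<lambda>t. g x t * v t) integrable_on cbox (-\<bar>y\<bar>) \<bar>y\<bar>"
      by (simp add: integrable_continuous_real)
  next
    have "continuous_on (U \<times> cbox (-\<bar>y\<bar>) \<bar>y\<bar>) (\<lambda>p. gx (fst p) (snd p) * v (snd p))"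
      by (intro continuous_intros continuous_on_subset[OF cont_gx]
            continuous_on_subset[OF continuous_on_Omega_snd(1)[OF cont_v]]) (auto dest: memU)
    then show "continuous_on (U \<times> cbox (-\<bar>y\<bar>) \<bar>y\<bar>) (\<lambda>(x, t). gx x t * v t)"
      by (simp add: case_prod_beta')
  qed (use U in auto)
  then have "((\<lambda>x. (if 0 \<le> y then 1 else -1) * integral {-\<bar>y\<bar>..\<bar>y\<bar>} (\<lambda>t. g x t * v t))
               has_vector_derivative
               (if 0 \<le> y then 1 else -1) * integral {-\<bar>y\<bar>..\<bar>y\<bar>} (\<lambda>t. gx x0 t * v t)) (at x0 within U)"
    by (intro derivative_intros) simp
  then show ?thesis
    unfolding kernel_integral_def dint_symmetric_eq[of y] U(4) .
qed

text \<open>Rescaling the interval of integration to [-1, 1] makes the domain independent of the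
  point, so that continuity follows from continuity of parametric integrals.\<close>

lemma continuous_on_kernel_integral:
  assumes cont_g: "continuous_on (Omega a) (\<lambda>p. g (fst p) (snd p))"
    and cont_v: "continuous_on {-a..a} v"
  shows "continuous_on (Omega a) (\<lambda>p. kernel_integral g v (fst p) (snd p))"
proof -
  define m :: "(real \<times> real) \<times> real \<Rightarrow> real \<times> real"
    where "m q = (fst (fst q), snd (fst q) * snd q)" for q
  have m: "m q \<in> Omega a" if "q \<in> Omega a \<times> cbox (-1) 1" for q
  proof -
    have "\<bar>snd (fst q) * snd q\<bar> \<le> \<bar>snd (fst q)\<bar>"
      using that by (auto simp: abs_mult mult_left_le)
    then show ?thesis
      using that by (auto simp: m_def Omega_def)
  qed
  then have sub: "m ` (Omega a \<times> cbox (-1) 1) \<subseteq> Omega a"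
    and sub_snd: "(snd \<circ> m) ` (Omega a \<times> cbox (-1) 1) \<subseteq> {-a..a}"
    by (force simp: Omega_def)+
  have cont_m: "continuous_on (Omega a \<times> cbox (-1) 1) m"
    unfolding m_def by (intro continuous_intros)
  have "continuous_on (Omega a \<times> cbox (-1) 1)
          (\<lambda>q. ((\<lambda>p. g (fst p) (snd p)) \<circ> m) q * (v \<circ> (snd \<circ> m)) q)"
    by (intro continuous_on_mult continuous_on_compose cont_m continuous_intros
          continuous_on_subset[OF cont_g sub] continuous_on_subset[OF cont_v sub_snd])
  then have cont_integrand:
    "continuous_on (Omega a \<times> cbox (-1) 1) (\<lambda>(p, s). g (fst p) (snd p * s) * v (snd p * s))"
    by (simp add: m_def o_def case_prod_beta')
  have rescaled: "kernel_integral g v (fst p) (snd p)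
        = of_real (snd p) * integral (cbox (-1) 1) (\<lambda>s. g (fst p) (snd p * s) * v (snd p * s))"
    if "p \<in> Omega a" for p
  proof -
    have xa: "\<bar>fst p\<bar> \<le> a" "\<bar>snd p\<bar> \<le> \<bar>fst p\<bar>"
      using that by (auto simp: Omega_def)
    have "continuous_on {-\<bar>snd p\<bar>..\<bar>snd p\<bar>} (\<lambda>t. g (fst p) t * v t)"
      by (intro continuous_intros continuous_on_subset[OF continuous_on_Omega_slice[OF cont_g xa(1)]]
            continuous_on_subset[OF cont_v]) (use xa in auto)
    then show ?thesis
      by (simp add: kernel_integral_def dint_symmetric_rescale)
  qed
  from integral_continuous_on_param[OF cont_integrand]
  have "continuous_on (Omega a)
          (\<lambda>p. of_real (snd p) * integral (cbox (-1) 1) (\<lambda>s. g (fst p) (snd p * s) * v (snd p * s)))"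
    by (intro continuous_intros)
  then show ?thesis
    by (rule continuous_on_cong[THEN iffD1, rotated 2]) (use rescaled in auto)
qed

lemma has_vector_derivative_kernel_integral_diagonal:
  assumes g_x: "\<And>x t. (x, t) \<in> Omega a \<Longrightarrow>
                  ((\<lambda>y. g y t) has_vector_derivative gx x t) (at x within {y. (y, t) \<in> Omega a})"
    and cont_g: "continuous_on (Omega a) (\<lambda>p. g (fst p) (snd p))"
    and cont_gx: "continuous_on (Omega a) (\<lambda>p. gx (fst p) (snd p))"
    and cont_v: "continuous_on {-a..a} v"
    and x: "x \<in> {-a..a}"
  shows "((\<lambda>x. kernel_integral g v x x) has_vector_derivative
            kernel_integral gx v x x + (g x x * v x + g x (-x) * v (-x))) (at x within {-a..a})"
proof (rule has_vector_derivative_Omega_diagonals(1)[where F="kernel_integral g v"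
      and Fx="kernel_integral gx v" and Ft="\<lambda>x y. g x y * v y + g x (-y) * v (-y)"])
  show "continuous_on (Omega a) (\<lambda>p. g (fst p) (snd p) * v (snd p) + g (fst p) (- snd p) * v (- snd p))"
    by (intro continuous_intros cont_g continuous_on_Omega_reflect continuous_on_Omega_snd cont_v)
qed (use x in \<open>auto intro: has_vector_derivative_kernel_integral_x[OF g_x cont_g cont_gx cont_v]
      has_vector_derivative_kernel_integral_y[OF cont_g cont_v]
      continuous_on_kernel_integral[OF cont_gx cont_v]\<close>)

text \<open>Integration by parts against the primitive of u, followed by the reflection t \<mapsto> -t.\<close>

lemma dint_tail_kernel_eq:
  fixes k u :: "real \<Rightarrow> complex"
  assumes cont_k: "continuous_on {-\<bar>x\<bar>..\<bar>x\<bar>} k" and cont_u: "continuous_on {-\<bar>x\<bar>..\<bar>x\<bar>} u"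
  shows "dint (-x) x (\<lambda>t. dint t x (\<lambda>s. k s - k (-s)) * u t) = dint (-x) x (\<lambda>t. k t * dint (-t) t u)"
proof -
  let ?S = "{-\<bar>x\<bar>..\<bar>x\<bar>}"
  define g where "g = (\<lambda>s. k s - k (-s))"
  define P where "P = (\<lambda>t. dint t x g)"
  define U where "U = (\<lambda>t. dint 0 t u)"
  have cont_k': "continuous_on ?S (\<lambda>t. k (-t))"
    by (rule continuous_on_reflect[OF cont_k])
  have cont_g: "continuous_on ?S g"
    unfolding g_def by (intro continuous_intros cont_k cont_k')
  have U: "(U has_vector_derivative u t) (at t within ?S)" if "t \<in> ?S" for t
    unfolding U_def by (rule has_vector_derivative_dint[OF cont_u]) (use that in auto)
  have cont_U: "continuous_on ?S U" and cont_U': "continuous_on ?S (\<lambda>t. U (-t))"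
    using continuous_on_vector_derivative[OF U] by (auto intro: continuous_on_reflect)
  have P: "(P has_vector_derivative - g t) (at t within ?S)" if "t \<in> ?S" for t
  proof -
    have "((\<lambda>t. - dint x t g) has_vector_derivative - g t) (at t within ?S)"
      using that by (intro derivative_intros has_vector_derivative_dint[OF cont_g]) auto
    then show ?thesis
      unfolding P_def by (subst dint_swap) simp
  qed
  have cont_P: "continuous_on ?S P"
    by (rule continuous_on_vector_derivative[OF P])
  have P_ends: "P x = 0" "P (-x) = 0"
    unfolding P_def g_def by (simp_all add: dint_odd_eq_0)
  have "dint (-x) x (\<lambda>t. P t * u t + - g t * U t) = P x * U x - P (-x) * U (-x)"
    using P U
    by (intro dint_fundamental_theorem)
       (auto simp: atLeastAtMost_min_max_symmetric intro!: derivative_eq_intros)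
  moreover have "dint (-x) x (\<lambda>t. P t * u t + - g t * U t)
                   = dint (-x) x (\<lambda>t. P t * u t) - dint (-x) x (\<lambda>t. g t * U t)"
    by (subst dint_add)
       (auto simp: atLeastAtMost_min_max_symmetric dint_neg intro!: continuous_intros cont_P cont_u cont_g cont_U)
  ultimately have "dint (-x) x (\<lambda>t. P t * u t) = dint (-x) x (\<lambda>t. g t * U t)"
    using P_ends by simp
  also have "\<dots> = dint (-x) x (\<lambda>t. k t * U t) - dint (-x) x (\<lambda>t. k (-t) * U t)"
    unfolding g_def
    by (subst dint_diff[symmetric])
       (auto simp: atLeastAtMost_min_max_symmetric algebra_simps intro!: continuous_intros cont_k cont_k' cont_U)
  also have "dint (-x) x (\<lambda>t. k (-t) * U t) = dint (-x) x (\<lambda>t. k t * U (-t))"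
    using dint_reflect[of x "\<lambda>t. k t * U (-t)"] by simp
  also have "dint (-x) x (\<lambda>t. k t * U t) - dint (-x) x (\<lambda>t. k t * U (-t))
               = dint (-x) x (\<lambda>t. k t * (U t - U (-t)))"
    by (subst dint_diff[symmetric])
       (auto simp: atLeastAtMost_min_max_symmetric algebra_simps intro!: continuous_intros cont_k cont_U cont_U')
  also have "\<dots> = dint (-x) x (\<lambda>t. k t * dint (-t) t u)"
    unfolding U_def
    by (intro dint_cong arg_cong2[where f=times] refl dint_split[OF cont_u, symmetric])
       (auto simp: atLeastAtMost_min_max_symmetric)
  finally show ?thesis
    by (simp add: P_def g_def)
qed

lemma has_vector_derivative_symmetric_average:
  fixes u u' u'' :: "real \<Rightarrow> complex"
  assumes u': "\<And>x. x \<in> {-a..a} \<Longrightarrow> (u has_vector_derivative u' x) (at x within {-a..a})"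
    and u'': "\<And>x. x \<in> {-a..a} \<Longrightarrow> (u' has_vector_derivative u'' x) (at x within {-a..a})"
    and x: "x \<in> {-a..a}"
  shows "((\<lambda>t. u t + c * dint (-t) t u) has_vector_derivative u' x + c * (u x + u (-x)))
           (at x within {-a..a})"
    and "((\<lambda>t. u' t + c * (u t + u (-t))) has_vector_derivative u'' x + c * dint (-x) x u'')
           (at x within {-a..a})"
proof -
  show "((\<lambda>t. u t + c * dint (-t) t u) has_vector_derivative u' x + c * (u x + u (-x)))
          (at x within {-a..a})"
    using has_vector_derivative_dint_symmetric[OF continuous_on_vector_derivative[OF u'] x]
    by (intro derivative_intros u' x)
  have "dint (-x) x u'' = u' x - u' (-x)"
    using x
    by (intro dint_fundamental_theorem has_vector_derivative_within_subset[OF u''])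
       (auto simp: atLeastAtMost_min_max_symmetric)
  then show "((\<lambda>t. u' t + c * (u t + u (-t))) has_vector_derivative u'' x + c * dint (-x) x u'')
               (at x within {-a..a})"
    using has_vector_derivative_reflect[OF u' x]
    by (auto intro!: derivative_eq_intros u' u'' x)
qed

section \<open>The transmutation operator\<close>

lemma bT_zero_eq: "bT K 0 v x = v x + kernel_integral K v x x"
  by (simp add: bT_def bK_def kernel_integral_def)

lemma bT_cmult: "bT K h (\<lambda>t. c * u t) x = c * bT K h u x"
proof -
  have "(\<lambda>t. bK K h x t * (c * u t)) = (\<lambda>t. c * (bK K h x t * u t))"
    by (auto simp: algebra_simps)
  then show ?thesis
    by (simp add: bT_def dint_cmult algebra_simps)
qed

locale goursat_kernel =
  fixes a :: real and q :: "real \<Rightarrow> complex" and K Kx Kt Kxx Ktt :: "real \<Rightarrow> real \<Rightarrow> complex"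
  assumes a_pos: "a > 0"
    and cont_q: "continuous_on {-a..a} q"
    and K_x: "\<And>x t. (x, t) \<in> Omega a \<Longrightarrow>
               ((\<lambda>y. K y t) has_vector_derivative Kx x t) (at x within {y. (y, t) \<in> Omega a})"
    and K_t: "\<And>x t. (x, t) \<in> Omega a \<Longrightarrow>
               ((\<lambda>s. K x s) has_vector_derivative Kt x t) (at t within {s. (x, s) \<in> Omega a})"
    and K_xx: "\<And>x t. (x, t) \<in> Omega a \<Longrightarrow>
               ((\<lambda>y. Kx y t) has_vector_derivative Kxx x t) (at x within {y. (y, t) \<in> Omega a})"
    and K_tt: "\<And>x t. (x, t) \<in> Omega a \<Longrightarrow>
               ((\<lambda>s. Kt x s) has_vector_derivative Ktt x t) (at t within {s. (x, s) \<in> Omega a})"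
    and cont_K: "continuous_on (Omega a) (\<lambda>p. K (fst p) (snd p))"
    and cont_Kx: "continuous_on (Omega a) (\<lambda>p. Kx (fst p) (snd p))"
    and cont_Kt: "continuous_on (Omega a) (\<lambda>p. Kt (fst p) (snd p))"
    and cont_Kxx: "continuous_on (Omega a) (\<lambda>p. Kxx (fst p) (snd p))"
    and cont_Ktt: "continuous_on (Omega a) (\<lambda>p. Ktt (fst p) (snd p))"
    and K_pde: "\<And>x t. (x, t) \<in> Omega a \<Longrightarrow> Kxx x t - q x * K x t = Ktt x t"
    and K_diagonal: "\<And>x. x \<in> {-a..a} \<Longrightarrow> K x x = dint 0 x q / 2"
    and K_antidiagonal: "\<And>x. x \<in> {-a..a} \<Longrightarrow> K x (-x) = 0"
begin

lemma has_vector_derivative_half_primitive_q: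
  "x \<in> {-a..a} \<Longrightarrow> ((\<lambda>x. dint 0 x q / 2) has_vector_derivative q x / 2) (at x within {-a..a})"
  using a_pos by (intro derivative_intros has_vector_derivative_dint[OF cont_q]) auto

text \<open>Differentiating the two boundary conditions along the diagonals.\<close>

lemma K_partials_diagonal:
  assumes x: "x \<in> {-a..a}"
  shows "Kx x x + Kt x x = q x / 2" and "Kx x (-x) = Kt x (-x)"
proof -
  have diagonal: "((\<lambda>x. K x x) has_vector_derivative Kx x x + Kt x x) (at x within {-a..a})"
    by (rule has_vector_derivative_Omega_diagonals(1)[OF K_x K_t cont_Kx cont_Kt x])
  have antidiagonal: "((\<lambda>x. K x (-x)) has_vector_derivative Kx x (-x) - Kt x (-x)) (at x within {-a..a})"
    by (rule has_vector_derivative_Omega_diagonals(2)[OF K_x K_t cont_Kx cont_Kt x])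
  have "((\<lambda>x. K x x) has_vector_derivative q x / 2) (at x within {-a..a})"
    using has_vector_derivative_half_primitive_q[OF x]
    by (rule has_vector_derivative_transform_within[where d=1]) (use x K_diagonal in auto)
  with diagonal show "Kx x x + Kt x x = q x / 2"
    by (intro vector_derivative_unique_within_closed_interval[where a="-a" and b=a]) (use a_pos x in auto)
  have "((\<lambda>x. K x (-x)) has_vector_derivative 0) (at x within {-a..a})"
    using has_vector_derivative_const[of 0 "at x within {-a..a}"]
    by (rule has_vector_derivative_transform_within[where d=1]) (use x K_antidiagonal in auto)
  with antidiagonal have "Kx x (-x) - Kt x (-x) = 0"
    by (intro vector_derivative_unique_within_closed_interval[where a="-a" and b=a]) (use a_pos x in auto)
  then show "Kx x (-x) = Kt x (-x)"
    by simp
qed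

lemma continuous_on_K_slice:
  assumes "x \<in> {-a..a}"
  shows "continuous_on {-\<bar>x\<bar>..\<bar>x\<bar>} (\<lambda>t. K x t)"
  using assms by (intro continuous_on_Omega_slice[OF cont_K]) auto

lemma kernel_integral_Ktt:
  assumes cont_v: "continuous_on {-a..a} v" and x: "x \<in> {-a..a}"
  shows "kernel_integral Ktt v x x = kernel_integral Kxx v x x - q x * kernel_integral K v x x"
proof -
  have "kernel_integral Ktt v x x = dint (-x) x (\<lambda>t. Kxx x t * v t - q x * (K x t * v t))"
    unfolding kernel_integral_def
    using x K_pde
    by (intro dint_cong) (auto simp: mem_Omega_iff algebra_simps min_def max_def split: if_splits)
  also have "\<dots> = kernel_integral Kxx v x x - q x * kernel_integral K v x x"
    unfolding kernel_integral_def dint_cmult[symmetric] using x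
    by (intro dint_diff)
       (auto simp: atLeastAtMost_min_max_symmetric intro!: continuous_intros
          continuous_on_Omega_slice[OF cont_Kxx] continuous_on_K_slice continuous_on_subset[OF cont_v])
  finally show ?thesis .
qed

lemma kernel_integral_by_parts:
  assumes v': "\<And>x. x \<in> {-a..a} \<Longrightarrow> (v has_vector_derivative v' x) (at x within {-a..a})"
    and v'': "\<And>x. x \<in> {-a..a} \<Longrightarrow> (v' has_vector_derivative v'' x) (at x within {-a..a})"
    and cont_v'': "continuous_on {-a..a} v''"
    and x: "x \<in> {-a..a}"
  shows "kernel_integral K v'' x x = K x x * v' x - Kt x x * v x - K x (-x) * v' (-x)
           + Kt x (-x) * v (-x) + kernel_integral Ktt v x x"
proof -
  let ?S = "{-\<bar>x\<bar>..\<bar>x\<bar>}"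
  have sub: "?S \<subseteq> {-a..a}"
    using x by auto
  have "((\<lambda>t. K x t * v' t - Kt x t * v t) has_vector_derivative K x t * v'' t - Ktt x t * v t)
          (at t within ?S)" if t: "t \<in> ?S" for t
  proof -
    have slice: "{s. (x, s) \<in> Omega a} = ?S" and xt: "(x, t) \<in> Omega a"
      using x t by (auto simp: Omega_slice mem_Omega_iff)
    have Kt: "((\<lambda>s. K x s) has_vector_derivative Kt x t) (at t within ?S)"
      and Ktt: "((\<lambda>s. Kt x s) has_vector_derivative Ktt x t) (at t within ?S)"
      using K_t[OF xt] K_tt[OF xt] unfolding slice .
    have "(v' has_vector_derivative v'' t) (at t within ?S)"
      and "(v has_vector_derivative v' t) (at t within ?S)"
      using t sub by (auto intro: has_vector_derivative_within_subset[OF v''] has_vector_derivative_within_subset[OF v'])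
    from has_vector_derivative_diff[OF has_vector_derivative_mult[OF Kt this(1)]
                                       has_vector_derivative_mult[OF Ktt this(2)]]
    show ?thesis
      by (simp add: algebra_simps)
  qed
  then have "dint (-x) x (\<lambda>t. K x t * v'' t - Ktt x t * v t)
               = (K x x * v' x - Kt x x * v x) - (K x (-x) * v' (-x) - Kt x (-x) * v (-x))"
    by (intro dint_fundamental_theorem) (simp add: atLeastAtMost_min_max_symmetric)
  moreover have "dint (-x) x (\<lambda>t. K x t * v'' t - Ktt x t * v t)
                   = kernel_integral K v'' x x - kernel_integral Ktt v x x"
    unfolding kernel_integral_def using x sub
    by (intro dint_diff)
       (auto simp: atLeastAtMost_min_max_symmetric intro!: continuous_intros continuous_on_K_slice
          continuous_on_Omega_slice[OF cont_Ktt] continuous_on_subset[OF cont_v'']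
          continuous_on_subset[OF continuous_on_vector_derivative[OF v']])
  ultimately have "kernel_integral K v'' x x
      = (K x x * v' x - Kt x x * v x) - (K x (-x) * v' (-x) - Kt x (-x) * v (-x)) + kernel_integral Ktt v x x"
    by (simp add: diff_eq_eq)
  then show ?thesis
    by (simp add: algebra_simps)
qed

lemma bT_zero_transmutes:
  assumes v': "\<And>x. x \<in> {-a..a} \<Longrightarrow> (v has_vector_derivative v' x) (at x within {-a..a})"
    and v'': "\<And>x. x \<in> {-a..a} \<Longrightarrow> (v' has_vector_derivative v'' x) (at x within {-a..a})"
    and cont_v'': "continuous_on {-a..a} v''"
  obtains D1 D2 where
    "\<And>x. x \<in> {-a..a} \<Longrightarrow> (bT K 0 v has_vector_derivative D1 x) (at x within {-a..a})"
    "\<And>x. x \<in> {-a..a} \<Longrightarrow> (D1 has_vector_derivative D2 x) (at x within {-a..a})"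
    "\<And>x. x \<in> {-a..a} \<Longrightarrow> - D2 x + q x * bT K 0 v x = bT K 0 (\<lambda>t. - v'' t) x"
    "D1 0 = v' 0"
proof -
  define D1 where "D1 x = v' x + kernel_integral Kx v x x + dint 0 x q / 2 * v x" for x
  define D2 where "D2 x = v'' x + kernel_integral Kxx v x x + Kx x x * v x + Kx x (-x) * v (-x)
                            + q x / 2 * v x + dint 0 x q / 2 * v' x" for x
  have cont_v: "continuous_on {-a..a} v"
    by (rule continuous_on_vector_derivative[OF v'])
  have "(bT K 0 v has_vector_derivative D1 x) (at x within {-a..a})" if x: "x \<in> {-a..a}" for x
  proof -
    have "((\<lambda>x. v x + kernel_integral K v x x) has_vector_derivative
            v' x + (kernel_integral Kx v x x + (K x x * v x + K x (-x) * v (-x)))) (at x within {-a..a})"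
      by (intro derivative_intros v' x
            has_vector_derivative_kernel_integral_diagonal[OF K_x cont_K cont_Kx cont_v x])
    then show ?thesis
      using K_diagonal[OF x] K_antidiagonal[OF x] by (simp add: bT_zero_eq[abs_def] D1_def add.assoc)
  qed
  moreover have "(D1 has_vector_derivative D2 x) (at x within {-a..a})" if x: "x \<in> {-a..a}" for x
  proof -
    have "(D1 has_vector_derivative v'' x + (kernel_integral Kxx v x x + (Kx x x * v x + Kx x (-x) * v (-x)))
            + (dint 0 x q / 2 * v' x + q x / 2 * v x)) (at x within {-a..a})"
      unfolding D1_def[abs_def]
      by (intro derivative_intros v' v'' x has_vector_derivative_half_primitive_q
            has_vector_derivative_kernel_integral_diagonal[OF K_xx cont_Kx cont_Kxx cont_v x])
    then show ?thesis
      by (simp add: D2_def algebra_simps)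
  qed
  moreover have "- D2 x + q x * bT K 0 v x = bT K 0 (\<lambda>t. - v'' t) x" if x: "x \<in> {-a..a}" for x
  proof -
    have diagonal: "q x = 2 * (Kx x x + Kt x x)" "Kx x (-x) = Kt x (-x)"
      using K_partials_diagonal[OF x] by (simp_all add: field_simps)
    have "bT K 0 (\<lambda>t. - v'' t) x = - v'' x - kernel_integral K v'' x x"
      by (simp add: bT_zero_eq kernel_integral_uminus)
    also have "\<dots> = - v'' x - (K x x * v' x - Kt x x * v x - K x (-x) * v' (-x) + Kt x (-x) * v (-x)
                      + kernel_integral Kxx v x x - q x * kernel_integral K v x x)"
      by (simp only: kernel_integral_by_parts[OF v' v'' cont_v'' x] kernel_integral_Ktt[OF cont_v x])
         (simp add: algebra_simps)
    also have "\<dots> = - D2 x + q x * bT K 0 v x"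
      unfolding D2_def bT_zero_eq K_diagonal[OF x] K_antidiagonal[OF x] diagonal
      by (simp add: algebra_simps)
    finally show ?thesis
      by simp
  qed
  moreover have "D1 0 = v' 0"
    by (simp add: D1_def kernel_integral_def)
  ultimately show ?thesis
    by (rule that)
qed

lemma bT_eq_bT_zero_symmetric_average:
  assumes cont_u: "continuous_on {-a..a} u" and x: "x \<in> {-a..a}"
  shows "bT K h u x = bT K 0 (\<lambda>t. u t + h / 2 * dint (-t) t u) x"
proof -
  let ?S = "{-\<bar>x\<bar>..\<bar>x\<bar>}"
  let ?P = "\<lambda>t. dint t x (\<lambda>s. K x s - K x (-s))"
  have sub: "?S \<subseteq> {-a..a}"
    using x by auto
  have cont: "continuous_on ?S (\<lambda>t. K x t)" "continuous_on ?S u" "continuous_on ?S (\<lambda>t. dint (-t) t u)"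
    using x continuous_on_subset[OF cont_u sub]
      continuous_on_vector_derivative[OF has_vector_derivative_dint_symmetric[OF cont_u]]
    by (auto intro: continuous_on_K_slice continuous_on_subset[OF _ sub])
  have tail: "dint (-x) x (\<lambda>t. ?P t * u t) = dint (-x) x (\<lambda>t. K x t * dint (-t) t u)"
    by (rule dint_tail_kernel_eq[OF cont(1,2)])
  have cont_odd: "continuous_on ?S (\<lambda>s. K x s - K x (-s))"
    by (intro continuous_intros cont(1) continuous_on_reflect[OF cont(1)])
  have "continuous_on ?S (\<lambda>t. dint x t (\<lambda>s. K x s - K x (-s)))"
    by (rule continuous_on_vector_derivative, rule has_vector_derivative_dint[OF cont_odd]) auto
  then have "continuous_on ?S (\<lambda>t. - dint x t (\<lambda>s. K x s - K x (-s)))"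
    by (intro continuous_intros)
  moreover have "(\<lambda>t. - dint x t (\<lambda>s. K x s - K x (-s))) = ?P"
    by (rule ext) (rule dint_swap[symmetric])
  ultimately have P_cont: "continuous_on ?S (\<lambda>t. ?P t * u t)"
    by (metis (no_types) cont(2) continuous_on_mult)
  have "bT K h u x = u x + dint (-x) x (\<lambda>t. h / 2 * u t + K x t * u t + h / 2 * (?P t * u t))"
    by (simp add: bT_def bK_def algebra_simps)
  also have "\<dots> = u x + h / 2 * dint (-x) x u + dint (-x) x (\<lambda>t. K x t * u t)
                   + h / 2 * dint (-x) x (\<lambda>t. ?P t * u t)"
    by (subst dint_add, (auto simp: atLeastAtMost_min_max_symmetric intro!: continuous_intros cont P_cont)[2])+
       (simp only: dint_cmult add.assoc)
  also have "\<dots> = u x + h / 2 * dint (-x) x u + dint (-x) x (\<lambda>t. K x t * u t)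
                   + h / 2 * dint (-x) x (\<lambda>t. K x t * dint (-t) t u)"
    by (simp only: tail)
  also have "\<dots> = bT K 0 (\<lambda>t. u t + h / 2 * dint (-t) t u) x"
  proof -
    have "dint (-x) x (\<lambda>t. K x t * (u t + h / 2 * dint (-t) t u))
            = dint (-x) x (\<lambda>t. K x t * u t + h / 2 * (K x t * dint (-t) t u))"
      by (simp add: algebra_simps)
    also have "\<dots> = dint (-x) x (\<lambda>t. K x t * u t) + dint (-x) x (\<lambda>t. h / 2 * (K x t * dint (-t) t u))"
      by (rule dint_add) (auto simp: atLeastAtMost_min_max_symmetric intro!: continuous_intros cont)
    also have "\<dots> = dint (-x) x (\<lambda>t. K x t * u t) + h / 2 * dint (-x) x (\<lambda>t. K x t * dint (-t) t u)"
      by (simp only: dint_cmult)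
    finally show ?thesis
      by (simp add: bT_zero_eq kernel_integral_def algebra_simps)
  qed
  finally show ?thesis .
qed

text \<open>The symmetric average v(t) = u(t) + h/2 \<integral>(-t..t) u satisfies
  v'' = u'' + h/2 \<integral>(-t..t) u'', so the intertwining property of bT K 0 carries over to
  bT K h u = bT K 0 v.\<close>

lemma bT_transmutes:
  assumes u': "\<And>x. x \<in> {-a..a} \<Longrightarrow> (u has_vector_derivative u' x) (at x within {-a..a})"
    and u'': "\<And>x. x \<in> {-a..a} \<Longrightarrow> (u' has_vector_derivative u'' x) (at x within {-a..a})"
    and cont_u'': "continuous_on {-a..a} u''"
  obtains D1 D2 where
    "\<And>x. x \<in> {-a..a} \<Longrightarrow> (bT K h u has_vector_derivative D1 x) (at x within {-a..a})"
    "\<And>x. x \<in> {-a..a} \<Longrightarrow> (D1 has_vector_derivative D2 x) (at x within {-a..a})"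
    "\<And>x. x \<in> {-a..a} \<Longrightarrow> - D2 x + q x * bT K h u x = bT K h (\<lambda>t. - u'' t) x"
    "D1 0 = u' 0 + h * u 0"
proof -
  let ?v = "\<lambda>t. u t + h / 2 * dint (-t) t u"
  let ?v' = "\<lambda>t. u' t + h / 2 * (u t + u (-t))"
  let ?v'' = "\<lambda>t. u'' t + h / 2 * dint (-t) t u''"
  have cont_v'': "continuous_on {-a..a} ?v''"
    using continuous_on_vector_derivative[OF has_vector_derivative_dint_symmetric[OF cont_u'']]
    by (intro continuous_intros cont_u'')
  obtain D1 D2 where D1: "\<And>x. x \<in> {-a..a} \<Longrightarrow> (bT K 0 ?v has_vector_derivative D1 x) (at x within {-a..a})"
    and D2: "\<And>x. x \<in> {-a..a} \<Longrightarrow> (D1 has_vector_derivative D2 x) (at x within {-a..a})"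
    and intertwines: "\<And>x. x \<in> {-a..a} \<Longrightarrow> - D2 x + q x * bT K 0 ?v x = bT K 0 (\<lambda>t. - ?v'' t) x"
    and D1_0: "D1 0 = ?v' 0"
    using bT_zero_transmutes[OF has_vector_derivative_symmetric_average[OF u' u''] cont_v''] by blast
  have cont_u: "continuous_on {-a..a} u"
    by (rule continuous_on_vector_derivative[OF u'])
  have average: "bT K h u x = bT K 0 ?v x" if "x \<in> {-a..a}" for x
    by (rule bT_eq_bT_zero_symmetric_average[OF cont_u that])
  have "(\<lambda>t. - u'' t + h / 2 * dint (-t) t (\<lambda>s. - u'' s)) = (\<lambda>t. - ?v'' t)"
    by (simp add: dint_neg)
  then have average'': "bT K h (\<lambda>t. - u'' t) x = bT K 0 (\<lambda>t. - ?v'' t) x" if "x \<in> {-a..a}" for x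
    using bT_eq_bT_zero_symmetric_average[OF _ that] cont_u'' by (simp add: continuous_intros)
  show ?thesis
  proof (rule that[of D1 D2])
    fix x
    assume x: "x \<in> {-a..a}"
    show "(bT K h u has_vector_derivative D1 x) (at x within {-a..a})"
      by (rule has_vector_derivative_transform_within[OF D1[OF x], where d=1]) (use x average in auto)
    show "(D1 has_vector_derivative D2 x) (at x within {-a..a})"
      by (rule D2[OF x])
    show "- D2 x + q x * bT K h u x = bT K h (\<lambda>t. - u'' t) x"
      using intertwines[OF x] average[OF x] average''[OF x] by simp
  qed (simp add: D1_0)
qed


lemma bT_intertwines:
  assumes "\<And>x. x \<in> {-a..a} \<Longrightarrow> (u has_vector_derivative u' x) (at x within {-a..a})"
    and "\<And>x. x \<in> {-a..a} \<Longrightarrow> (u' has_vector_derivative u'' x) (at x within {-a..a})"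
    and "continuous_on {-a..a} u''"
  shows "\<exists>v' v''. (\<forall>x\<in>{-a..a}. (bT K h u has_vector_derivative v' x) (at x within {-a..a})) \<and>
                  (\<forall>x\<in>{-a..a}. (v' has_vector_derivative v'' x) (at x within {-a..a})) \<and>
                  (\<forall>x\<in>{-a..a}. - v'' x + q x * bT K h u x = bT K h (\<lambda>t. - u'' t) x)"
proof -
  obtain D1 D2 where
    "\<And>x. x \<in> {-a..a} \<Longrightarrow> (bT K h u has_vector_derivative D1 x) (at x within {-a..a})"
    "\<And>x. x \<in> {-a..a} \<Longrightarrow> (D1 has_vector_derivative D2 x) (at x within {-a..a})"
    "\<And>x. x \<in> {-a..a} \<Longrightarrow> - D2 x + q x * bT K h u x = bT K h (\<lambda>t. - u'' t) x"
    "D1 0 = u' 0 + h * u 0"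
    using bT_transmutes[OF assms, where h=h] by blast
  then show ?thesis
    by blast
qed

end

section \<open>Solutions of f'' = q f\<close>

lemma has_vector_derivative_inverse:
  fixes f :: "real \<Rightarrow> 'a::real_normed_field"
  assumes "(f has_vector_derivative f') (at x within S)" "f x \<noteq> 0"
  shows "((\<lambda>x. inverse (f x)) has_vector_derivative - (f' / (f x)\<^sup>2)) (at x within S)"
proof -
  have "((\<lambda>x. inverse (f x)) has_derivative (\<lambda>h. - (inverse (f x) * (h *\<^sub>R f') * inverse (f x)))) (at x within S)"
    using Deriv.has_derivative_inverse[OF assms(2) assms(1)[unfolded has_vector_derivative_def]] .
  moreover have "(\<lambda>h. - (inverse (f x) * (h *\<^sub>R f') * inverse (f x))) = (\<lambda>h. h *\<^sub>R (- (f' / (f x)\<^sup>2)))"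
    using assms(2) by (auto simp: field_simps power2_eq_square)
  ultimately show ?thesis
    by (simp add: has_vector_derivative_def)
qed

locale nonvanishing_solution =
  fixes a :: real and q f f' f'' :: "real \<Rightarrow> complex"
  assumes a_pos: "a > 0"
    and f': "\<And>x. x \<in> {-a..a} \<Longrightarrow> (f has_vector_derivative f' x) (at x within {-a..a})"
    and f'': "\<And>x. x \<in> {-a..a} \<Longrightarrow> (f' has_vector_derivative f'' x) (at x within {-a..a})"
    and f_ode: "\<And>x. x \<in> {-a..a} \<Longrightarrow> f'' x = q x * f x"
    and f_nonzero: "\<And>x. x \<in> {-a..a} \<Longrightarrow> f x \<noteq> 0"
    and f_0: "f 0 = 1"
begin

lemma zero_mem: "0 \<in> {-a..a}"
  using a_pos by simp

lemma continuous_on_f: "continuous_on {-a..a} f"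
  by (rule continuous_on_vector_derivative[OF f'])

text \<open>The Wronskian of f and a solution w with zero Cauchy data vanishes, hence w/f is constant.\<close>

lemma solution_eq_0:
  assumes w': "\<And>x. x \<in> {-a..a} \<Longrightarrow> (w has_vector_derivative w' x) (at x within {-a..a})"
    and w'': "\<And>x. x \<in> {-a..a} \<Longrightarrow> (w' has_vector_derivative w'' x) (at x within {-a..a})"
    and w_ode: "\<And>x. x \<in> {-a..a} \<Longrightarrow> w'' x = q x * w x"
    and w_0: "w 0 = 0" "w' 0 = 0"
    and x: "x \<in> {-a..a}"
  shows "w x = 0"
proof -
  have "((\<lambda>x. f x * w' x - f' x * w x) has_vector_derivative 0) (at x within {-a..a})"
    if x: "x \<in> {-a..a}" for x
    using has_vector_derivative_diff[OF has_vector_derivative_mult[OF f'[OF x] w''[OF x]]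
                                       has_vector_derivative_mult[OF f''[OF x] w'[OF x]]]
    by (simp add: f_ode[OF x] w_ode[OF x] algebra_simps)
  then obtain c where c: "\<And>x. x \<in> {-a..a} \<Longrightarrow> f x * w' x - f' x * w x = c"
    using has_vector_derivative_zero_constant[of "{-a..a}"] by blast
  have wronskian: "f x * w' x - f' x * w x = 0" if "x \<in> {-a..a}" for x
    using c[OF that] c[OF zero_mem] w_0 by simp
  have "((\<lambda>x. w x * inverse (f x)) has_vector_derivative 0) (at x within {-a..a})"
    if x: "x \<in> {-a..a}" for x
  proof -
    have "w x * - (f' x / (f x)\<^sup>2) + w' x * inverse (f x) = (f x * w' x - f' x * w x) / (f x)\<^sup>2"
      using f_nonzero[OF x] by (simp add: field_simps power2_eq_square)
    then show ?thesis
      using has_vector_derivative_mult[OF w'[OF x] has_vector_derivative_inverse[OF f'[OF x] f_nonzero[OF x]]]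
      by (simp add: wronskian[OF x])
  qed
  then obtain c where c: "\<And>x. x \<in> {-a..a} \<Longrightarrow> w x * inverse (f x) = c"
    using has_vector_derivative_zero_constant[of "{-a..a}"] by blast
  then show ?thesis
    using c[OF x] c[OF zero_mem] w_0 f_nonzero[OF x] by simp
qed

lemma solutions_eq:
  assumes y': "\<And>x. x \<in> {-a..a} \<Longrightarrow> (y has_vector_derivative y' x) (at x within {-a..a})"
    and y'': "\<And>x. x \<in> {-a..a} \<Longrightarrow> (y' has_vector_derivative y'' x) (at x within {-a..a})"
    and z': "\<And>x. x \<in> {-a..a} \<Longrightarrow> (z has_vector_derivative z' x) (at x within {-a..a})"
    and z'': "\<And>x. x \<in> {-a..a} \<Longrightarrow> (z' has_vector_derivative z'' x) (at x within {-a..a})"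
    and same_rhs: "\<And>x. x \<in> {-a..a} \<Longrightarrow> y'' x - q x * y x = z'' x - q x * z x"
    and "y 0 = z 0" "y' 0 = z' 0"
    and "x \<in> {-a..a}"
  shows "y x = z x"
proof -
  have "y x - z x = 0"
  proof (rule solution_eq_0)
    fix x
    assume x: "x \<in> {-a..a}"
    show "((\<lambda>x. y x - z x) has_vector_derivative y' x - z' x) (at x within {-a..a})"
      by (rule has_vector_derivative_diff[OF y'[OF x] z'[OF x]])
    show "((\<lambda>x. y' x - z' x) has_vector_derivative y'' x - z'' x) (at x within {-a..a})"
      by (rule has_vector_derivative_diff[OF y''[OF x] z''[OF x]])
    show "y'' x - z'' x = q x * (y x - z x)"
      using same_rhs[OF x] by (simp add: algebra_simps)
  qed (use assms in simp_all)
  then show ?thesis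
    by simp
qed

text \<open>phi_quot k is the X- or the X-tilde-function occurring in phi f 0 k, according to the
  parity of k; phi_dual k is the function of the other kind, which enters the recursion for
  phi_quot (Suc k).\<close>

definition phi_quot :: "nat \<Rightarrow> real \<Rightarrow> complex" where
  "phi_quot k x = (if odd k then X f 0 k x else Xt f 0 k x)"

definition phi_dual :: "nat \<Rightarrow> real \<Rightarrow> complex" where
  "phi_dual k x = (if even k then X f 0 k x else Xt f 0 k x)"

lemma phi_eq_f_mult_phi_quot: "phi f 0 k x = f x * phi_quot k x"
  by (simp add: phi_def phi_quot_def)

lemma phi_quot_0 [simp]: "phi_quot 0 = (\<lambda>_. 1)" and phi_dual_0 [simp]: "phi_dual 0 = (\<lambda>_. 1)"
  by (simp_all add: phi_quot_def phi_dual_def fun_eq_iff)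

lemma phi_quot_Suc: "phi_quot (Suc n) x = of_nat (Suc n) * dint 0 x (\<lambda>s. phi_dual n s * inverse ((f s)\<^sup>2))"
  and phi_dual_Suc: "phi_dual (Suc n) x = of_nat (Suc n) * dint 0 x (\<lambda>s. phi_quot n s * (f s)\<^sup>2)"
  by (cases "even n"; simp add: phi_quot_def phi_dual_def)+

lemma phi_at_0: "phi f 0 k 0 = (if k = 0 then 1 else 0)"
  by (cases k) (simp_all add: phi_eq_f_mult_phi_quot phi_quot_Suc f_0)

lemma has_vector_derivative_phi_quot_dual_Suc:
  assumes "continuous_on {-a..a} (phi_quot n)" "continuous_on {-a..a} (phi_dual n)" "x \<in> {-a..a}"
  shows "(phi_quot (Suc n) has_vector_derivative of_nat (Suc n) * (phi_dual n x * inverse ((f x)\<^sup>2)))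
           (at x within {-a..a})"
    and "(phi_dual (Suc n) has_vector_derivative of_nat (Suc n) * (phi_quot n x * (f x)\<^sup>2))
           (at x within {-a..a})"
proof -
  have "continuous_on {-a..a} (\<lambda>s. inverse ((f s)\<^sup>2))"
    by (intro continuous_intros continuous_on_f) (use f_nonzero in auto)
  then have "continuous_on {-a..a} (\<lambda>s. phi_dual n s * inverse ((f s)\<^sup>2))"
    by (intro continuous_on_mult assms(2))
  moreover have "continuous_on {-a..a} (\<lambda>s. phi_quot n s * (f s)\<^sup>2)"
    by (intro continuous_intros assms(1) continuous_on_f)
  ultimately have "((\<lambda>x. dint 0 x (\<lambda>s. phi_dual n s * inverse ((f s)\<^sup>2))) has_vector_derivative
                      phi_dual n x * inverse ((f x)\<^sup>2)) (at x within {-a..a})"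
    and "((\<lambda>x. dint 0 x (\<lambda>s. phi_quot n s * (f s)\<^sup>2)) has_vector_derivative
           phi_quot n x * (f x)\<^sup>2) (at x within {-a..a})"
    using zero_mem assms(3) by (auto intro: has_vector_derivative_dint)
  then show "(phi_quot (Suc n) has_vector_derivative of_nat (Suc n) * (phi_dual n x * inverse ((f x)\<^sup>2)))
          (at x within {-a..a})"
    and "(phi_dual (Suc n) has_vector_derivative of_nat (Suc n) * (phi_quot n x * (f x)\<^sup>2))
          (at x within {-a..a})"
    unfolding phi_quot_Suc[abs_def] phi_dual_Suc[abs_def]
    by (auto intro: derivative_intros)
qed

lemma continuous_on_phi_quot_dual:
  "continuous_on {-a..a} (phi_quot n) \<and> continuous_on {-a..a} (phi_dual n)"
proof (induction n)
  case (Suc n)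
  note deriv = has_vector_derivative_phi_quot_dual_Suc[OF Suc.IH[THEN conjunct1] Suc.IH[THEN conjunct2]]
  show ?case
    using continuous_on_vector_derivative[OF deriv(1)] continuous_on_vector_derivative[OF deriv(2)]
    by blast
qed simp

lemma has_vector_derivative_phi_quot_dual:
  assumes "x \<in> {-a..a}"
  shows "(phi_quot k has_vector_derivative of_nat k * (phi_dual (k - 1) x * inverse ((f x)\<^sup>2)))
           (at x within {-a..a})"
    and "(phi_dual k has_vector_derivative of_nat k * (phi_quot (k - 1) x * (f x)\<^sup>2))
           (at x within {-a..a})"
  using has_vector_derivative_phi_quot_dual_Suc[OF continuous_on_phi_quot_dual[THEN conjunct1]
          continuous_on_phi_quot_dual[THEN conjunct2] assms]
  by (cases k; simp)+

lemma phi_recurrence: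
  obtains P1 P2 where
    "\<And>x. x \<in> {-a..a} \<Longrightarrow> (phi f 0 k has_vector_derivative P1 x) (at x within {-a..a})"
    "\<And>x. x \<in> {-a..a} \<Longrightarrow> (P1 has_vector_derivative P2 x) (at x within {-a..a})"
    "\<And>x. x \<in> {-a..a} \<Longrightarrow> P2 x - q x * phi f 0 k x = of_nat (k * (k - 1)) * phi f 0 (k - 2) x"
    "P1 0 = (if k = 0 then f' 0 else if k = 1 then 1 else 0)"
proof (cases k)
  case 0
  then have "phi f 0 k = f"
    by (auto simp: phi_eq_f_mult_phi_quot)
  show ?thesis
  proof (rule that[of f' f''])
    show "\<And>x. x \<in> {-a..a} \<Longrightarrow> (phi f 0 k has_vector_derivative f' x) (at x within {-a..a})"
      using f' \<open>phi f 0 k = f\<close> by simp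
  qed (use f'' f_ode 0 \<open>phi f 0 k = f\<close> in auto)
next
  case (Suc n)
  have quot': "(phi_quot (Suc n) has_vector_derivative of_nat (Suc n) * (phi_dual n x * inverse ((f x)\<^sup>2)))
                 (at x within {-a..a})" if "x \<in> {-a..a}" for x
    using has_vector_derivative_phi_quot_dual(1)[OF that, of "Suc n"] by simp
  note dual' = has_vector_derivative_phi_quot_dual(2)[of _ n]
  define P1 where "P1 x = f' x * phi_quot (Suc n) x + of_nat (Suc n) * (phi_dual n x * inverse (f x))" for x
  define P2 where "P2 x = f'' x * phi_quot (Suc n) x + of_nat (Suc n) * of_nat n * f x * phi_quot (n - 1) x"
    for x
  have "(phi f 0 (Suc n) has_vector_derivative P1 x) (at x within {-a..a})" if x: "x \<in> {-a..a}" for x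
  proof -
    have "f x * (of_nat (Suc n) * (phi_dual n x * inverse ((f x)\<^sup>2))) + f' x * phi_quot (Suc n) x = P1 x"
      using f_nonzero[OF x] by (simp add: P1_def field_simps power2_eq_square)
    with has_vector_derivative_mult[OF f'[OF x] quot'[OF x]] show ?thesis
      by (simp add: phi_eq_f_mult_phi_quot[abs_def])
  qed
  moreover have "(P1 has_vector_derivative P2 x) (at x within {-a..a})" if x: "x \<in> {-a..a}" for x
  proof -
    have "(P1 has_vector_derivative
             (f' x * (of_nat (Suc n) * (phi_dual n x * inverse ((f x)\<^sup>2))) + f'' x * phi_quot (Suc n) x)
             + of_nat (Suc n) * (phi_dual n x * - (f' x / (f x)\<^sup>2)
                                 + of_nat n * (phi_quot (n - 1) x * (f x)\<^sup>2) * inverse (f x)))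
            (at x within {-a..a})"
      unfolding P1_def[abs_def]
      by (intro has_vector_derivative_add has_vector_derivative_mult has_vector_derivative_mult_right
            f'[OF x] f''[OF x] quot'[OF x] dual'[OF x] has_vector_derivative_inverse f_nonzero[OF x])
    moreover have "(f' x * (of_nat (Suc n) * (phi_dual n x * inverse ((f x)\<^sup>2))) + f'' x * phi_quot (Suc n) x)
             + of_nat (Suc n) * (phi_dual n x * - (f' x / (f x)\<^sup>2)
                                 + of_nat n * (phi_quot (n - 1) x * (f x)\<^sup>2) * inverse (f x)) = P2 x"
      using f_nonzero[OF x] by (simp add: P2_def field_simps power2_eq_square)
    ultimately show ?thesis
      by simp
  qed
  moreover have "P2 x - q x * phi f 0 (Suc n) x = of_nat (Suc n * n) * phi f 0 (n - 1) x"
    if "x \<in> {-a..a}" for x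
    by (simp add: P2_def f_ode[OF that] phi_eq_f_mult_phi_quot algebra_simps)
  moreover have "P1 0 = (if n = 0 then 1 else 0)"
    by (cases n) (simp_all add: P1_def phi_quot_Suc phi_dual_Suc f_0)
  ultimately show ?thesis
    using that[of P1 P2] Suc by simp
qed

end

section \<open>Images of the powers\<close>

lemma has_vector_derivative_of_real_power:
  "((\<lambda>t. (complex_of_real t) ^ k) has_vector_derivative of_nat k * (complex_of_real x) ^ (k - 1))
     (at x within S)"
  using has_vector_derivative_of_real[OF DERIV_pow[of k x S]] by simp

lemma has_vector_derivative_of_real_power':
  "((\<lambda>t. of_nat k * (complex_of_real t) ^ (k - 1)) has_vector_derivative
      of_nat (k * (k - 1)) * (complex_of_real x) ^ (k - 2)) (at x within S)"
  using has_vector_derivative_mult_right[OF has_vector_derivative_of_real_power[of "k - 1"], of "of_nat k"]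
  by (simp add: mult.assoc numeral_2_eq_2)

locale transmutation_setting =
  goursat_kernel a q K Kx Kt Kxx Ktt + sol: nonvanishing_solution a q f f' f''
  for a :: real and q f f' f'' :: "real \<Rightarrow> complex" and K Kx Kt Kxx Ktt :: "real \<Rightarrow> real \<Rightarrow> complex"
begin

text \<open>Both sides solve y'' - q y = k (k - 1) phi_(k-2) with the same Cauchy data at 0, the
  right-hand side being known by induction.\<close>

lemma bT_power_eq_phi:
  "x \<in> {-a..a} \<Longrightarrow> bT K (f' 0) (\<lambda>t. (complex_of_real t) ^ k) x = phi f 0 k x"
proof (induction k arbitrary: x rule: less_induct)
  case (less k)
  let ?u = "\<lambda>t. (complex_of_real t) ^ k"
  let ?u' = "\<lambda>t. of_nat k * (complex_of_real t) ^ (k - 1)"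
  let ?u'' = "\<lambda>t. of_nat (k * (k - 1)) * (complex_of_real t) ^ (k - 2)"
  have continuous_u'': "continuous_on {-a..a} ?u''"
    by (intro continuous_intros)
  obtain D1 D2 where D1: "\<And>x. x \<in> {-a..a} \<Longrightarrow> (bT K (f' 0) ?u has_vector_derivative D1 x) (at x within {-a..a})"
    and D2: "\<And>x. x \<in> {-a..a} \<Longrightarrow> (D1 has_vector_derivative D2 x) (at x within {-a..a})"
    and intertwines: "\<And>x. x \<in> {-a..a} \<Longrightarrow> - D2 x + q x * bT K (f' 0) ?u x = bT K (f' 0) (\<lambda>t. - ?u'' t) x"
    and D1_0: "D1 0 = ?u' 0 + f' 0 * ?u 0"
    using bT_transmutes[OF has_vector_derivative_of_real_power[of k] has_vector_derivative_of_real_power'[of k]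
        continuous_u'', where h="f' 0"] by blast
  obtain P1 P2 where P1: "\<And>x. x \<in> {-a..a} \<Longrightarrow> (phi f 0 k has_vector_derivative P1 x) (at x within {-a..a})"
    and P2: "\<And>x. x \<in> {-a..a} \<Longrightarrow> (P1 has_vector_derivative P2 x) (at x within {-a..a})"
    and recurrence: "\<And>x. x \<in> {-a..a} \<Longrightarrow>
                       P2 x - q x * phi f 0 k x = of_nat (k * (k - 1)) * phi f 0 (k - 2) x"
    and P1_0: "P1 0 = (if k = 0 then f' 0 else if k = 1 then 1 else 0)"
    using sol.phi_recurrence[of k] by blast
  have lower: "bT K (f' 0) (\<lambda>t. - ?u'' t) x = - of_nat (k * (k - 1)) * phi f 0 (k - 2) x"
    if "x \<in> {-a..a}" for x
  proof (cases "k < 2")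
    case True
    then have "k = 0 \<or> k = 1"
      by auto
    then show ?thesis
      using bT_cmult[of K "f' 0" 0 "\<lambda>_. 0" x] by auto
  next
    case False
    then show ?thesis
      using bT_cmult[of K "f' 0" "- of_nat (k * (k - 1))"] less.IH[of "k - 2" x] that by simp
  qed
  show ?case
  proof (rule sol.solutions_eq[OF D1 D2 P1 P2])
    fix x
    assume x: "x \<in> {-a..a}"
    have "- D2 x + q x * bT K (f' 0) ?u x = - (P2 x - q x * phi f 0 k x)"
      unfolding intertwines[OF x] lower[OF x] recurrence[OF x] by simp
    then show "D2 x - q x * bT K (f' 0) ?u x = P2 x - q x * phi f 0 k x"
      by (simp add: algebra_simps)
  next
    show "bT K (f' 0) ?u 0 = phi f 0 k 0" and "D1 0 = P1 0"
      using D1_0 P1_0 by (simp_all add: bT_def sol.phi_at_0 power_0_left)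
  qed (use less.prems in auto)
qed

end

theorem mainTheorem4:
  fixes a :: real
    and q q' f f' f'' :: "real \<Rightarrow> complex"
    and K Kx Kt Kxx Kxt Ktt :: "real \<Rightarrow> real \<Rightarrow> complex"
  assumes a_pos: "a > 0"
    and q_C1: "\<forall>x\<in>{-a..a}. (q has_vector_derivative q' x) (at x within {-a..a})"
              "continuous_on {-a..a} q'"
    and f_C2: "\<forall>x\<in>{-a..a}. (f has_vector_derivative f' x) (at x within {-a..a})"
              "\<forall>x\<in>{-a..a}. (f' has_vector_derivative f'' x) (at x within {-a..a})"
              "continuous_on {-a..a} f''"
    and f_ode: "\<forall>x\<in>{-a..a}. f'' x - q x * f x = 0"
    and f_nz: "\<forall>x\<in>{-a..a}. f x \<noteq> 0"
    and f0: "f 0 = 1"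
    and K_dx: "\<forall>(x, t)\<in>Omega a.
          ((\<lambda>y. K y t) has_vector_derivative Kx x t) (at x within {y. (y, t) \<in> Omega a})"
    and K_dt: "\<forall>(x, t)\<in>Omega a.
          ((\<lambda>s. K x s) has_vector_derivative Kt x t) (at t within {s. (x, s) \<in> Omega a})"
    and K_dxx: "\<forall>(x, t)\<in>Omega a.
          ((\<lambda>y. Kx y t) has_vector_derivative Kxx x t) (at x within {y. (y, t) \<in> Omega a})"
    and K_dxt: "\<forall>(x, t)\<in>Omega a.
          ((\<lambda>s. Kx x s) has_vector_derivative Kxt x t) (at t within {s. (x, s) \<in> Omega a})"
    and K_dtt: "\<forall>(x, t)\<in>Omega a.
          ((\<lambda>s. Kt x s) has_vector_derivative Ktt x t) (at t within {s. (x, s) \<in> Omega a})"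
    and K_cont: "continuous_on (Omega a) (\<lambda>p. K (fst p) (snd p))"
                "continuous_on (Omega a) (\<lambda>p. Kx (fst p) (snd p))"
                "continuous_on (Omega a) (\<lambda>p. Kt (fst p) (snd p))"
                "continuous_on (Omega a) (\<lambda>p. Kxx (fst p) (snd p))"
                "continuous_on (Omega a) (\<lambda>p. Kxt (fst p) (snd p))"
                "continuous_on (Omega a) (\<lambda>p. Ktt (fst p) (snd p))"
    and K_pde: "\<forall>(x, t)\<in>Omega a. Kxx x t - q x * K x t = Ktt x t"
    and K_diag: "\<forall>x\<in>{-a..a}. K x x = dint 0 x q / 2"
    and K_antidiag: "\<forall>x\<in>{-a..a}. K x (- x) = 0"
  shows "(\<forall>k::nat. \<forall>x\<in>{-a..a}.
            bT K (f' 0) (\<lambda>t. (complex_of_real t) ^ k) x = phi f 0 k x)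
       \<and> (\<forall>u u' u'' :: real \<Rightarrow> complex.
            (\<forall>x\<in>{-a..a}. (u has_vector_derivative u' x) (at x within {-a..a})) \<and>
            (\<forall>x\<in>{-a..a}. (u' has_vector_derivative u'' x) (at x within {-a..a})) \<and>
            continuous_on {-a..a} u''
          \<longrightarrow> (\<exists>v' v'' :: real \<Rightarrow> complex.
                (\<forall>x\<in>{-a..a}. (bT K (f' 0) u has_vector_derivative v' x) (at x within {-a..a})) \<and>
                (\<forall>x\<in>{-a..a}. (v' has_vector_derivative v'' x) (at x within {-a..a})) \<and>
                (\<forall>x\<in>{-a..a}. - v'' x + q x * bT K (f' 0) u x
                                = bT K (f' 0) (\<lambda>t. - u'' t) x)))"
proof -
  have "continuous_on {-a..a} q"
    using q_C1(1) by (intro continuous_on_vector_derivative) blast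
  moreover have "\<And>x. x \<in> {-a..a} \<Longrightarrow> f'' x = q x * f x"
    using f_ode by simp
  ultimately interpret transmutation_setting a q f f' f'' K Kx Kt Kxx Ktt
    by unfold_locales (use assms in \<open>simp_all add: Ball_def split_paired_All\<close>)
  show ?thesis
    by (intro conjI allI impI ballI bT_power_eq_phi bT_intertwines) auto
qed


end
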